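(* Let $H\in\mathbb{R}^{n\times n}$ be Hurwitz, and consider the stable LTI (reference) system $\dot x(t)=Hx(t)$, sampled with time step $h>0$, so that the reference trajectory satisfies $x_{ref}(n+1\,|\,k)=e^{Hh}x_{ref}(n\,|\,k)$, with $x_{ref}(0\,|\,k)$ the reference state at time $k$ (hence $x_{ref}(0\,|\,k+1)=x_{ref}(1\,|\,k)$). Consider the quantized system $x_q(k+1)=A_qx_q(k)+hB_qu(k)$, $x_q\in\mathbb{R}^n$, $B_q\in\mathbb{R}^{n\times m}$, $u(k)\in\{-1,0,1\}^m$, controlled by the QS-MPC law: at each time $k$, solve $$\min_{u_{0|k},\dots,u_{N-1|k}} J(x_q(k),U(k))=|x_{N|k}-x_{ref}(N|k)|_P^2+\sum_{n=0}^{N-1}\Big(|x_{n|k}-x_{ref}(n|k)|_Q^2+|u_{n|k}|_R^2\Big)$$ subject to $u_{n|k}\in\{-1,0,1\}^m$, $x_{0|k}=x_q(k)$, $x_{n+1|k}=A_qx_{n|k}+hB_qu_{n|k}$, $x_{ref}(n+1|k)=e^{Hh}x_{ref}(n|k)$ for $n=0,\dots,N-1$, and apply $u(k)=u^*_{0|k}$, the first element of an optimal sequence $U^*(k)$. Here $P,Q,R$ are symmetric positive definite, $N\ge 1$ is the prediction horizon, and $|x|_P^2=x^TPx$. If (a) $A_q=e^{Hh}$, and (b) the symmetric positive definite matrices $P,Q$ satisfy $Q-P+A_q^TPA_q\prec 0$, then the QS-MPC closed-loop solution is asymptotically stable (the quantized system asymptotically emulates the LTI system and converges to its equilibrium).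
   Context: QS-MPC denotes the model predictive control scheme for the quantized system described in the claim, used to emulate the continuous-time LTI system $\dot x=Hx$ (obtained from $\dot x=Ax+Bu$ with stabilizing feedback $u=Kx$, $H=A+BK$). $\prec 0$ means negative definite. The equilibrium of the LTI system is the origin. *)

theory Defs
  imports "HOL-Analysis.Analysis"
begin

(* Matrix powers and the matrix exponential e^A = sum_k A^k / k! for square real matrices.
   (The componentwise product on vec is not matrix multiplication, so the generic exp is
   not the matrix exponential; we define it via the matrix product **.) *)
primrec mpow :: "real^'n^'n \<Rightarrow> nat \<Rightarrow> real^'n^'n" where
  "mpow A 0 = mat 1"
| "mpow A (Suc k) = A ** mpow A k"

definition mexp :: "real^'n^'n \<Rightarrow> real^'n^'n" where
  "mexp A = (\<Sum>k. (1 / fact k) *\<^sub>R mpow A k)"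

definition cmat :: "real^'n^'m \<Rightarrow> complex^'n^'m" where
  "cmat A = (\<chi> i j. complex_of_real (A $ i $ j))"

definition hurwitz :: "real^'n^'n \<Rightarrow> bool" where
  "hurwitz H \<longleftrightarrow> (\<forall>(c::complex) (v::complex^'n). v \<noteq> 0 \<and> cmat H *v v = c *s v \<longrightarrow> Re c < 0)"

definition sym_pos_def :: "real^'n^'n \<Rightarrow> bool" where
  "sym_pos_def P \<longleftrightarrow> transpose P = P \<and> (\<forall>x. x \<noteq> 0 \<longrightarrow> x \<bullet> (P *v x) > 0)"

definition neg_def :: "real^'n^'n \<Rightarrow> bool" where
  "neg_def M \<longleftrightarrow> transpose M = M \<and> (\<forall>x. x \<noteq> 0 \<longrightarrow> x \<bullet> (M *v x) < 0)"

definition wnorm2 :: "real^'n^'n \<Rightarrow> real^'n \<Rightarrow> real" where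
  "wnorm2 P x = x \<bullet> (P *v x)"

definition qinputs :: "(real^'m) set" where
  "qinputs = {u. \<forall>i. u $ i \<in> {-1, 0, 1}}"

primrec xpred :: "real^'n^'n \<Rightarrow> real^'m^'n \<Rightarrow> real \<Rightarrow> real^'n \<Rightarrow> (nat \<Rightarrow> real^'m) \<Rightarrow> nat \<Rightarrow> real^'n" where
  "xpred Aq Bq h x U 0 = x"
| "xpred Aq Bq h x U (Suc n) = Aq *v xpred Aq Bq h x U n + h *\<^sub>R (Bq *v U n)"

definition xrefpred :: "real^'n^'n \<Rightarrow> real \<Rightarrow> real^'n \<Rightarrow> nat \<Rightarrow> real^'n" where
  "xrefpred H h r n = mpow (mexp (h *\<^sub>R H)) n *v r"

definition mpc_cost ::
  "real^'n^'n \<Rightarrow> real^'m^'n \<Rightarrow> real^'n^'n \<Rightarrow> real \<Rightarrow> real^'n^'n \<Rightarrow> real^'n^'n \<Rightarrow> real^'m^'m \<Rightarrow> nat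
   \<Rightarrow> real^'n \<Rightarrow> real^'n \<Rightarrow> (nat \<Rightarrow> real^'m) \<Rightarrow> real" where
  "mpc_cost Aq Bq H h P Q R N x r U =
     wnorm2 P (xpred Aq Bq h x U N - xrefpred H h r N)
     + (\<Sum>n<N. wnorm2 Q (xpred Aq Bq h x U n - xrefpred H h r n) + wnorm2 R (U n))"

definition admissible :: "nat \<Rightarrow> (nat \<Rightarrow> real^'m) \<Rightarrow> bool" where
  "admissible N U \<longleftrightarrow> (\<forall>n<N. U n \<in> qinputs)"

definition mpc_optimal ::
  "real^'n^'n \<Rightarrow> real^'m^'n \<Rightarrow> real^'n^'n \<Rightarrow> real \<Rightarrow> real^'n^'n \<Rightarrow> real^'n^'n \<Rightarrow> real^'m^'m \<Rightarrow> nat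
   \<Rightarrow> real^'n \<Rightarrow> real^'n \<Rightarrow> (nat \<Rightarrow> real^'m) \<Rightarrow> bool" where
  "mpc_optimal Aq Bq H h P Q R N x r U \<longleftrightarrow> admissible N U \<and>
     (\<forall>V. admissible N V \<longrightarrow> mpc_cost Aq Bq H h P Q R N x r U \<le> mpc_cost Aq Bq H h P Q R N x r V)"

definition qs_mpc_closed_loop ::
  "real^'n^'n \<Rightarrow> real^'m^'n \<Rightarrow> real^'n^'n \<Rightarrow> real \<Rightarrow> real^'n^'n \<Rightarrow> real^'n^'n \<Rightarrow> real^'m^'m \<Rightarrow> nat
   \<Rightarrow> (nat \<Rightarrow> real^'n) \<Rightarrow> (nat \<Rightarrow> real^'n) \<Rightarrow> (nat \<Rightarrow> real^'m) \<Rightarrow> bool" where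
  "qs_mpc_closed_loop Aq Bq H h P Q R N xq xr u \<longleftrightarrow>
     (\<forall>k. xr (Suc k) = mexp (h *\<^sub>R H) *v xr k
        \<and> xq (Suc k) = Aq *v xq k + h *\<^sub>R (Bq *v u k)
        \<and> (\<exists>U. mpc_optimal Aq Bq H h P Q R N (xq k) (xr k) U \<and> u k = U 0))"

end

theory Submission
  imports Defs
begin

(* Since A_q = e^{Hh} propagates the reference exactly, the tracking error e = x_q - x_ref obeys
   the quantized dynamics itself, and the MPC cost is the cost of steering e to 0.  The terminal
   condition makes |x|_P^2 a Lyapunov function of A_q with decrease |x|_Q^2.  Consequently the
   optimal cost is a Lyapunov function of the closed loop: the optimal sequence shifted by one
   step and padded with u = 0 is admissible and costs at least |e|_Q^2 less, while u = 0
   throughout bounds the optimal cost by |e|_P^2.  Summing the decreases gives e -> 0 and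
   |e(k)|_Q^2 <= |e(0)|_P^2; the reference satisfies the same estimates for |.|_P^2. *)

lemma inner_matrix_vector_mult_transpose:
  "(A *v x) \<bullet> y = x \<bullet> (transpose A *v y)" for A :: "real^'n^'m"
  by (metis dot_lmul_matrix inner_commute transpose_matrix_vector)

lemma wnorm2_matrix_vector_mult:
  "wnorm2 P (A *v x) = wnorm2 (transpose A ** P ** A) x"
  by (simp add: wnorm2_def inner_matrix_vector_mult_transpose matrix_vector_mul_assoc
      matrix_mul_assoc)

lemma wnorm2_zero [simp]: "wnorm2 P 0 = 0"
  by (simp add: wnorm2_def)

lemma wnorm2_scaleR: "wnorm2 P (c *\<^sub>R x) = c\<^sup>2 * wnorm2 P x"
  by (simp add: wnorm2_def matrix_vector_mult_scaleR power2_eq_square)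

lemma wnorm2_nonneg: "sym_pos_def P \<Longrightarrow> 0 \<le> wnorm2 P x"
  unfolding sym_pos_def_def wnorm2_def by (cases "x = 0") (auto simp: less_imp_le)

lemma wnorm2_lyapunov_decrease:
  assumes "neg_def (Q - P + transpose A ** P ** A)"
  shows "wnorm2 P (A *v x) + wnorm2 Q x \<le> wnorm2 P x"
proof -
  have "wnorm2 (Q - P + transpose A ** P ** A) x \<le> 0"
    using assms unfolding neg_def_def wnorm2_def by (cases "x = 0") (auto simp: less_imp_le)
  then show ?thesis
    using wnorm2_matrix_vector_mult[of P A x]
    by (simp add: wnorm2_def matrix_vector_mult_add_rdistrib
        matrix_vector_mult_diff_rdistrib inner_add_right inner_diff_right)
qed

lemma sym_pos_def_coercive:
  fixes P :: "real^'n^'n"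
  assumes "sym_pos_def P"
  obtains c where "c > 0" "\<And>x. c * (norm x)\<^sup>2 \<le> wnorm2 P x"
proof -
  have "continuous_on (sphere 0 1) (wnorm2 P)"
    unfolding wnorm2_def
    by (intro continuous_intros bounded_linear.continuous_on[OF matrix_vector_mul_bounded_linear])
  moreover have "axis undefined 1 \<in> sphere (0::real^'n) 1"
    by simp
  ultimately obtain x0 where x0: "x0 \<in> sphere 0 1"
    and x0_min: "\<And>y. y \<in> sphere 0 1 \<Longrightarrow> wnorm2 P x0 \<le> wnorm2 P y"
    using continuous_attains_inf[OF compact_sphere] by blast
  have "wnorm2 P x0 > 0"
    using x0 assms unfolding sym_pos_def_def wnorm2_def
    by (metis mem_sphere_0 norm_zero zero_neq_one)
  moreover have "wnorm2 P x0 * (norm x)\<^sup>2 \<le> wnorm2 P x" for x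
  proof (cases "x = 0")
    case False
    have "wnorm2 P x0 \<le> wnorm2 P ((1 / norm x) *\<^sub>R x)"
      using False by (intro x0_min) simp
    also have "\<dots> = wnorm2 P x / (norm x)\<^sup>2"
      by (simp add: wnorm2_scaleR power_divide)
    finally show ?thesis
      using False by (simp add: field_simps)
  qed simp
  ultimately show ?thesis
    by (rule that)
qed

lemma wnorm2_bounded:
  fixes P :: "real^'n^'n"
  obtains C where "C > 0" "\<And>x. wnorm2 P x \<le> C * (norm x)\<^sup>2"
proof -
  obtain C where "C > 0" and C: "\<And>x. norm (P *v x) \<le> norm x * C"
    using bounded_linear.pos_bounded[OF matrix_vector_mul_bounded_linear[of P]] by blast
  have "wnorm2 P x \<le> C * (norm x)\<^sup>2" for x
  proof -
    have "wnorm2 P x \<le> norm x * norm (P *v x)"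
      unfolding wnorm2_def by (rule norm_cauchy_schwarz)
    also have "\<dots> \<le> norm x * (norm x * C)"
      by (intro mult_left_mono C) simp
    finally show ?thesis
      by (simp add: power2_eq_square mult_ac)
  qed
  with \<open>C > 0\<close> show ?thesis
    by (rule that)
qed

lemma wnorm2_le_imp_norm_le:
  fixes P Q :: "real^'n^'n"
  assumes "sym_pos_def Q"
  obtains K where "K \<ge> 0" "\<And>x y. wnorm2 Q x \<le> wnorm2 P y \<Longrightarrow> norm x \<le> K * norm y"
proof -
  obtain c where "c > 0" and c: "\<And>x. c * (norm x)\<^sup>2 \<le> wnorm2 Q x"
    using sym_pos_def_coercive[OF assms] by blast
  obtain C where "C > 0" and C: "\<And>y. wnorm2 P y \<le> C * (norm y)\<^sup>2"
    using wnorm2_bounded by blast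
  have "norm x \<le> sqrt (C / c) * norm y" if "wnorm2 Q x \<le> wnorm2 P y" for x y
  proof -
    have "(norm x)\<^sup>2 \<le> (sqrt (C / c) * norm y)\<^sup>2"
      using c[of x] C[of y] that \<open>c > 0\<close> \<open>C > 0\<close> by (simp add: power_mult_distrib field_simps)
    then show ?thesis
      by (rule power2_le_imp_le) (use \<open>c > 0\<close> \<open>C > 0\<close> in simp)
  qed
  moreover have "sqrt (C / c) \<ge> 0"
    using \<open>c > 0\<close> \<open>C > 0\<close> by simp
  ultimately show ?thesis
    using that by blast
qed

lemma wnorm2_tendsto_zero_imp_tendsto_zero:
  fixes x :: "nat \<Rightarrow> real^'n"
  assumes "sym_pos_def Q" and "(\<lambda>k. wnorm2 Q (x k)) \<longlonglongrightarrow> 0"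
  shows "x \<longlonglongrightarrow> 0"
proof -
  obtain c where "c > 0" and c: "\<And>x. c * (norm x)\<^sup>2 \<le> wnorm2 Q x"
    using sym_pos_def_coercive[OF assms(1)] by blast
  show ?thesis
  proof (rule Lim_null_comparison)
    show "\<forall>\<^sub>F k in sequentially. norm (x k) \<le> sqrt (wnorm2 Q (x k) / c)"
      using c \<open>c > 0\<close> by (intro always_eventually allI) (simp add: real_le_rsqrt field_simps)
    show "(\<lambda>k. sqrt (wnorm2 Q (x k) / c)) \<longlonglongrightarrow> 0"
      using tendsto_real_sqrt[OF tendsto_divide_zero[OF assms(2), of c]] by simp
  qed
qed

lemma dissipation_tendsto_zero:
  fixes a g :: "nat \<Rightarrow> real"
  assumes "\<And>k. 0 \<le> a k" and "\<And>k. 0 \<le> g k" and "\<And>k. a (Suc k) + g k \<le> a k"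
  shows "g \<longlonglongrightarrow> 0"
proof -
  have partial_sums: "(\<Sum>j<k. g j) \<le> a 0 - a k" for k
  proof (induction k)
    case (Suc k)
    then show ?case
      using assms(3)[of k] by simp
  qed simp
  have "summable g"
  proof (rule summableI_nonneg_bounded)
    show "0 \<le> g k" for k
      by (rule assms(2))
    show "(\<Sum>j<k. g j) \<le> a 0" for k
      using partial_sums[of k] assms(1)[of k] by linarith
  qed
  then show ?thesis
    by (rule summable_LIMSEQ_zero)
qed

lemma dissipation_le_initial:
  fixes a g :: "nat \<Rightarrow> real"
  assumes "\<And>k. 0 \<le> g k" and "\<And>k. a (Suc k) + g k \<le> a k"
  shows "a k \<le> a 0"
proof -
  have "a (Suc k) \<le> a k" for k
    using assms(1)[of k] assms(2)[of k] by linarith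
  then have "decseq a"
    by (rule decseq_SucI)
  then show ?thesis
    by (simp add: decseqD)
qed


definition regulation_cost ::
  "real^'n^'n \<Rightarrow> real^'m^'n \<Rightarrow> real \<Rightarrow> real^'n^'n \<Rightarrow> real^'n^'n \<Rightarrow> real^'m^'m \<Rightarrow> nat
   \<Rightarrow> real^'n \<Rightarrow> (nat \<Rightarrow> real^'m) \<Rightarrow> real" where
  "regulation_cost A Bq h P Q R N e U =
     wnorm2 P (xpred A Bq h e U N) + (\<Sum>n<N. wnorm2 Q (xpred A Bq h e U n) + wnorm2 R (U n))"

definition regulation_optimal ::
  "real^'n^'n \<Rightarrow> real^'m^'n \<Rightarrow> real \<Rightarrow> real^'n^'n \<Rightarrow> real^'n^'n \<Rightarrow> real^'m^'m \<Rightarrow> nat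
   \<Rightarrow> real^'n \<Rightarrow> (nat \<Rightarrow> real^'m) \<Rightarrow> bool" where
  "regulation_optimal A Bq h P Q R N e U \<longleftrightarrow> admissible N U \<and>
     (\<forall>V. admissible N V \<longrightarrow> regulation_cost A Bq h P Q R N e U \<le> regulation_cost A Bq h P Q R N e V)"

lemma xpred_diff_free_response:
  "xpred A Bq h x U n - mpow A n *v r = xpred A Bq h (x - r) U n"
proof (induction n)
  case (Suc n)
  have "xpred A Bq h x U (Suc n) - mpow A (Suc n) *v r
      = A *v (xpred A Bq h x U n - mpow A n *v r) + h *\<^sub>R (Bq *v U n)"
    by (simp add: matrix_vector_mult_diff_distrib matrix_vector_mul_assoc[symmetric])
  then show ?case
    using Suc by simp
qed simp

lemma mpc_cost_eq_regulation_cost: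
  "mpc_cost (mexp (h *\<^sub>R H)) Bq H h P Q R N x r U
     = regulation_cost (mexp (h *\<^sub>R H)) Bq h P Q R N (x - r) U"
  unfolding mpc_cost_def regulation_cost_def xrefpred_def xpred_diff_free_response ..

lemma mpc_optimal_iff_regulation_optimal:
  "mpc_optimal (mexp (h *\<^sub>R H)) Bq H h P Q R N x r U
     \<longleftrightarrow> regulation_optimal (mexp (h *\<^sub>R H)) Bq h P Q R N (x - r) U"
  unfolding mpc_optimal_def regulation_optimal_def mpc_cost_eq_regulation_cost ..

lemma xpred_cong:
  "(\<And>i. i < n \<Longrightarrow> U i = V i) \<Longrightarrow> xpred A Bq h x U n = xpred A Bq h x V n"
  by (induction n) auto

lemma xpred_Suc_shift:
  "xpred A Bq h x U (Suc n) = xpred A Bq h (xpred A Bq h x U 1) (\<lambda>i. U (Suc i)) n"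
  by (induction n) auto

lemma regulation_cost_ge_stage_cost:
  assumes "N \<ge> 1" and "sym_pos_def P" and "sym_pos_def Q" and "sym_pos_def R"
  shows "wnorm2 Q e \<le> regulation_cost A Bq h P Q R N e U"
proof -
  obtain M where N: "N = Suc M"
    using assms(1) by (cases N) auto
  have "0 \<le> (\<Sum>n<M. wnorm2 Q (xpred A Bq h e U (Suc n)) + wnorm2 R (U (Suc n)))"
    by (intro sum_nonneg add_nonneg_nonneg wnorm2_nonneg assms)
  moreover have "0 \<le> wnorm2 P (xpred A Bq h e U N)" and "0 \<le> wnorm2 R (U 0)"
    by (intro wnorm2_nonneg assms)+
  ultimately show ?thesis
    unfolding regulation_cost_def N sum.lessThan_Suc_shift by simp
qed

lemma regulation_cost_zero_input_le:
  assumes "neg_def (Q - P + transpose A ** P ** A)"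
  shows "regulation_cost A Bq h P Q R N e (\<lambda>_. 0) \<le> wnorm2 P e"
proof -
  let ?x = "xpred A Bq h e (\<lambda>_. 0)"
  have "wnorm2 P (?x N) + (\<Sum>n<N. wnorm2 Q (?x n)) \<le> wnorm2 P e"
  proof (induction N)
    case (Suc N)
    then show ?case
      using wnorm2_lyapunov_decrease[OF assms, of "?x N"] by simp
  qed simp
  then show ?thesis
    by (simp add: regulation_cost_def)
qed

lemma regulation_cost_shift_le:
  fixes U :: "nat \<Rightarrow> real^'m"
  assumes "neg_def (Q - P + transpose A ** P ** A)" and "N \<ge> 1" and "sym_pos_def R"
  defines "W \<equiv> \<lambda>i. if i < N - 1 then U (Suc i) else 0"
  shows "regulation_cost A Bq h P Q R N (xpred A Bq h e U 1) W + wnorm2 Q e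
           \<le> regulation_cost A Bq h P Q R N e U"
proof -
  obtain M where N: "N = Suc M"
    using assms(2) by (cases N) auto
  let ?x = "xpred A Bq h e U"
  let ?y = "xpred A Bq h (?x 1) W"
  have y: "?y n = ?x (Suc n)" if "n \<le> M" for n
  proof -
    have "?y n = xpred A Bq h (?x 1) (\<lambda>i. U (Suc i)) n"
      by (rule xpred_cong) (use that in \<open>auto simp: W_def N\<close>)
    then show ?thesis
      by (simp only: xpred_Suc_shift)
  qed
  have yN: "?y N = A *v ?x N"
    using y[of M] by (simp add: N W_def)
  have sum_Q_W: "(\<Sum>n<N. wnorm2 Q (?y n)) = (\<Sum>n<M. wnorm2 Q (?x (Suc n))) + wnorm2 Q (?x N)"
    using y by (simp add: N)
  have sum_R_W: "(\<Sum>n<N. wnorm2 R (W n)) = (\<Sum>n<M. wnorm2 R (U (Suc n)))"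
    by (simp add: N W_def)
  have sum_Q_U: "(\<Sum>n<N. wnorm2 Q (?x n)) = wnorm2 Q e + (\<Sum>n<M. wnorm2 Q (?x (Suc n)))"
    unfolding N sum.lessThan_Suc_shift by simp
  have sum_R_U: "(\<Sum>n<N. wnorm2 R (U n)) = wnorm2 R (U 0) + (\<Sum>n<M. wnorm2 R (U (Suc n)))"
    unfolding N sum.lessThan_Suc_shift by simp
  have "0 \<le> wnorm2 R (U 0)"
    by (rule wnorm2_nonneg[OF assms(3)])
  moreover have "wnorm2 P (A *v ?x N) + wnorm2 Q (?x N) \<le> wnorm2 P (?x N)"
    by (rule wnorm2_lyapunov_decrease[OF assms(1)])
  ultimately show ?thesis
    unfolding regulation_cost_def sum.distrib sum_Q_W sum_R_W sum_Q_U sum_R_U yN by linarith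
qed

lemma regulation_optimal_le_terminal_cost:
  assumes "neg_def (Q - P + transpose A ** P ** A)"
    and "regulation_optimal A Bq h P Q R N e U"
  shows "regulation_cost A Bq h P Q R N e U \<le> wnorm2 P e"
proof -
  have "admissible N (\<lambda>_. 0)"
    by (simp add: admissible_def qinputs_def)
  then have "regulation_cost A Bq h P Q R N e U \<le> regulation_cost A Bq h P Q R N e (\<lambda>_. 0)"
    using assms(2) unfolding regulation_optimal_def by blast
  also have "\<dots> \<le> wnorm2 P e"
    by (rule regulation_cost_zero_input_le[OF assms(1)])
  finally show ?thesis .
qed

lemma regulation_optimal_cost_decrease:
  assumes "neg_def (Q - P + transpose A ** P ** A)" and "N \<ge> 1" and "sym_pos_def R"
    and "regulation_optimal A Bq h P Q R N e U"
    and "regulation_optimal A Bq h P Q R N (xpred A Bq h e U 1) U'"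
  shows "regulation_cost A Bq h P Q R N (xpred A Bq h e U 1) U' + wnorm2 Q e
           \<le> regulation_cost A Bq h P Q R N e U"
proof -
  let ?W = "\<lambda>i. if i < N - 1 then U (Suc i) else 0"
  have "admissible N ?W"
    using assms(4) by (auto simp: regulation_optimal_def admissible_def qinputs_def)
  then have "regulation_cost A Bq h P Q R N (xpred A Bq h e U 1) U'
               \<le> regulation_cost A Bq h P Q R N (xpred A Bq h e U 1) ?W"
    using assms(5) unfolding regulation_optimal_def by blast
  with regulation_cost_shift_le[OF assms(1-3), of Bq h e U] show ?thesis
    by linarith
qed

locale qs_mpc =
  fixes Aq :: "real^'n^'n" and Bq :: "real^'m^'n" and H :: "real^'n^'n" and h :: real
    and P Q :: "real^'n^'n" and R :: "real^'m^'m" and N :: nat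
  assumes horizon: "N \<ge> 1"
    and P_pos: "sym_pos_def P" and Q_pos: "sym_pos_def Q" and R_pos: "sym_pos_def R"
    and Aq_exact: "Aq = mexp (h *\<^sub>R H)"
    and terminal: "neg_def (Q - P + transpose Aq ** P ** Aq)"
begin

abbreviation closed_loop ::
  "(nat \<Rightarrow> real^'n) \<Rightarrow> (nat \<Rightarrow> real^'n) \<Rightarrow> (nat \<Rightarrow> real^'m) \<Rightarrow> bool" where
  "closed_loop \<equiv> qs_mpc_closed_loop Aq Bq H h P Q R N"

lemma closed_loop_reference_step:
  assumes "closed_loop xq xr u"
  shows "xr (Suc k) = Aq *v xr k"
  using assms Aq_exact unfolding qs_mpc_closed_loop_def by simp

lemma closed_loop_error_dynamics:
  assumes "closed_loop xq xr u"
  obtains U where "\<And>k. regulation_optimal Aq Bq h P Q R N (xq k - xr k) (U k)"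
    and "\<And>k. xq (Suc k) - xr (Suc k) = xpred Aq Bq h (xq k - xr k) (U k) 1"
proof -
  obtain U where opt: "\<And>k. mpc_optimal Aq Bq H h P Q R N (xq k) (xr k) (U k)"
    and first: "\<And>k. u k = U k 0"
    using assms unfolding qs_mpc_closed_loop_def by metis
  have "regulation_optimal Aq Bq h P Q R N (xq k - xr k) (U k)" for k
    using opt[of k] unfolding Aq_exact mpc_optimal_iff_regulation_optimal .
  moreover have "xq (Suc k) - xr (Suc k) = xpred Aq Bq h (xq k - xr k) (U k) 1" for k
    using assms first[of k] Aq_exact unfolding qs_mpc_closed_loop_def
    by (simp add: matrix_vector_mult_diff_distrib)
  ultimately show ?thesis
    by (rule that)
qed

lemma closed_loop_reference_decay:
  assumes "closed_loop xq xr u"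
  shows "wnorm2 P (xr k) \<le> wnorm2 P (xr 0)" and "xr \<longlonglongrightarrow> 0"
proof -
  have decrease: "wnorm2 P (xr (Suc k)) + wnorm2 Q (xr k) \<le> wnorm2 P (xr k)" for k
    unfolding closed_loop_reference_step[OF assms] by (rule wnorm2_lyapunov_decrease[OF terminal])
  show "wnorm2 P (xr k) \<le> wnorm2 P (xr 0)"
    by (rule dissipation_le_initial[where g = "\<lambda>k. wnorm2 Q (xr k)"])
      (use decrease wnorm2_nonneg[OF Q_pos] in auto)
  have "(\<lambda>k. wnorm2 Q (xr k)) \<longlonglongrightarrow> 0"
    by (rule dissipation_tendsto_zero[where a = "\<lambda>k. wnorm2 P (xr k)"])
      (use decrease wnorm2_nonneg[OF P_pos] wnorm2_nonneg[OF Q_pos] in auto)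
  with Q_pos show "xr \<longlonglongrightarrow> 0"
    by (rule wnorm2_tendsto_zero_imp_tendsto_zero)
qed

lemma closed_loop_error_decay:
  assumes "closed_loop xq xr u"
  shows "wnorm2 Q (xq k - xr k) \<le> wnorm2 P (xq 0 - xr 0)" and "(\<lambda>k. xq k - xr k) \<longlonglongrightarrow> 0"
proof -
  obtain U where opt: "\<And>k. regulation_optimal Aq Bq h P Q R N (xq k - xr k) (U k)"
    and step: "\<And>k. xq (Suc k) - xr (Suc k) = xpred Aq Bq h (xq k - xr k) (U k) 1"
    using closed_loop_error_dynamics[OF assms] by blast
  define V where "V k = regulation_cost Aq Bq h P Q R N (xq k - xr k) (U k)" for k
  have decrease: "V (Suc k) + wnorm2 Q (xq k - xr k) \<le> V k" for k
    using regulation_optimal_cost_decrease[OF terminal horizon R_pos opt opt[of "Suc k", unfolded step]]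
    unfolding V_def step .
  have stage: "wnorm2 Q (xq k - xr k) \<le> V k" for k
    unfolding V_def by (rule regulation_cost_ge_stage_cost[OF horizon P_pos Q_pos R_pos])
  have V_nonneg: "0 \<le> V k" for k
    using stage wnorm2_nonneg[OF Q_pos] order_trans by blast
  have "V k \<le> V 0"
    by (rule dissipation_le_initial[where g = "\<lambda>k. wnorm2 Q (xq k - xr k)"])
      (use decrease wnorm2_nonneg[OF Q_pos] in auto)
  then show "wnorm2 Q (xq k - xr k) \<le> wnorm2 P (xq 0 - xr 0)"
    using stage[of k] regulation_optimal_le_terminal_cost[OF terminal opt[of 0]]
    unfolding V_def by linarith
  have "(\<lambda>k. wnorm2 Q (xq k - xr k)) \<longlonglongrightarrow> 0"
    by (rule dissipation_tendsto_zero[where a = V])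
      (use decrease V_nonneg wnorm2_nonneg[OF Q_pos] in auto)
  with Q_pos show "(\<lambda>k. xq k - xr k) \<longlonglongrightarrow> 0"
    by (rule wnorm2_tendsto_zero_imp_tendsto_zero)
qed

lemma closed_loop_tendsto_zero:
  assumes "closed_loop xq xr u"
  shows "xq \<longlonglongrightarrow> 0"
  using tendsto_add[OF closed_loop_error_decay(2)[OF assms] closed_loop_reference_decay(2)[OF assms]]
  by simp

lemma closed_loop_linear_bound:
  obtains K where "K \<ge> 0"
    and "\<And>xq xr u k. closed_loop xq xr u \<Longrightarrow>
           norm (xq k) + norm (xr k) \<le> K * (norm (xq 0) + norm (xr 0))"
proof -
  obtain KQ where "KQ \<ge> 0" and KQ: "\<And>x y. wnorm2 Q x \<le> wnorm2 P y \<Longrightarrow> norm x \<le> KQ * norm y"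
    using wnorm2_le_imp_norm_le[OF Q_pos] by blast
  obtain KP where "KP \<ge> 0" and KP: "\<And>x y. wnorm2 P x \<le> wnorm2 P y \<Longrightarrow> norm x \<le> KP * norm y"
    using wnorm2_le_imp_norm_le[OF P_pos] by blast
  have "norm (xq k) + norm (xr k) \<le> (KQ + 2 * KP) * (norm (xq 0) + norm (xr 0))"
    if loop: "closed_loop xq xr u" for xq xr u k
  proof -
    have "norm (xq k - xr k) \<le> KQ * norm (xq 0 - xr 0)"
      by (rule KQ[OF closed_loop_error_decay(1)[OF loop]])
    also have "\<dots> \<le> KQ * (norm (xq 0) + norm (xr 0))"
      by (intro mult_left_mono norm_triangle_ineq4 \<open>KQ \<ge> 0\<close>)
    finally have "norm (xq k - xr k) \<le> KQ * (norm (xq 0) + norm (xr 0))" .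
    moreover have "norm (xr k) \<le> KP * norm (xr 0)"
      by (rule KP[OF closed_loop_reference_decay(1)[OF loop]])
    moreover have "norm (xq k) \<le> norm (xq k - xr k) + norm (xr k)"
      using norm_triangle_ineq[of "xq k - xr k" "xr k"] by simp
    moreover have "0 \<le> KP * norm (xq 0)"
      using \<open>KP \<ge> 0\<close> by simp
    ultimately show ?thesis
      by (simp add: algebra_simps)
  qed
  moreover have "KQ + 2 * KP \<ge> 0"
    using \<open>KQ \<ge> 0\<close> \<open>KP \<ge> 0\<close> by simp
  ultimately show ?thesis
    using that by blast
qed

lemma closed_loop_stable:
  "\<forall>\<epsilon>>0. \<exists>\<delta>>0. \<forall>xq xr u. closed_loop xq xr u \<longrightarrow>
     norm (xq 0) + norm (xr 0) < \<delta> \<longrightarrow> (\<forall>k. norm (xq k) + norm (xr k) < \<epsilon>)"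
proof (intro allI impI)
  fix \<epsilon> :: real
  assume "\<epsilon> > 0"
  obtain K where "K \<ge> 0" and bound: "\<And>xq xr u k. closed_loop xq xr u \<Longrightarrow>
      norm (xq k) + norm (xr k) \<le> K * (norm (xq 0) + norm (xr 0))"
    using closed_loop_linear_bound by blast
  have "norm (xq k) + norm (xr k) < \<epsilon>"
    if "closed_loop xq xr u"
      and small: "norm (xq 0) + norm (xr 0) < \<epsilon> / (K + 1)" for xq xr u k
  proof -
    have "norm (xq k) + norm (xr k) \<le> K * (norm (xq 0) + norm (xr 0))"
      by (rule bound[OF that(1)])
    also have "\<dots> \<le> (K + 1) * (norm (xq 0) + norm (xr 0))"
      by (simp add: algebra_simps)
    also have "\<dots> < \<epsilon>"
      using small \<open>K \<ge> 0\<close> by (simp add: field_simps)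
    finally show ?thesis .
  qed
  moreover have "\<epsilon> / (K + 1) > 0"
    using \<open>\<epsilon> > 0\<close> \<open>K \<ge> 0\<close> by simp
  ultimately show "\<exists>\<delta>>0. \<forall>xq xr u. closed_loop xq xr u \<longrightarrow>
      norm (xq 0) + norm (xr 0) < \<delta> \<longrightarrow> (\<forall>k. norm (xq k) + norm (xr k) < \<epsilon>)"
    by blast
qed

end

theorem theorem1:
  fixes H Aq P Q :: "real^'n^'n" and Bq :: "real^'m^'n" and R :: "real^'m^'m"
    and h :: real and N :: nat
  assumes "hurwitz H" and "h > 0" and "N \<ge> 1"
    and "sym_pos_def P" and "sym_pos_def Q" and "sym_pos_def R"
    and "Aq = mexp (h *\<^sub>R H)"
    and "neg_def (Q - P + transpose Aq ** P ** Aq)"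
  shows "(\<forall>\<epsilon>>0. \<exists>\<delta>>0. \<forall>xq xr u. qs_mpc_closed_loop Aq Bq H h P Q R N xq xr u \<longrightarrow>
            norm (xq 0) + norm (xr 0) < \<delta> \<longrightarrow> (\<forall>k. norm (xq k) + norm (xr k) < \<epsilon>))
       \<and> (\<forall>xq xr u. qs_mpc_closed_loop Aq Bq H h P Q R N xq xr u \<longrightarrow>
            xq \<longlonglongrightarrow> 0 \<and> xr \<longlonglongrightarrow> 0 \<and> (\<lambda>k. xq k - xr k) \<longlonglongrightarrow> 0)"
proof -
  interpret qs_mpc Aq Bq H h P Q R N
    using assms(3-8) by unfold_locales
  show ?thesis
    using closed_loop_stable closed_loop_tendsto_zero closed_loop_reference_decay(2)
      closed_loop_error_decay(2)
    by blast
qed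

end
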